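(* Let $r,\beta_0,a,\mu>0$ with $\beta_0<1$, and consider the family of systems $$\dot S = S(A-S)-\beta_0 IS,\qquad \dot I=\beta_0 IS-\mu I-\frac{rI}{a+I}$$ with bifurcation parameter $A>0$ (equivalently $\mathcal{R}_0=\beta_0A/(\mu+r/a)$). At the parameter value where $\mathcal{R}_0=\phi_0:=1-\dfrac{(a\beta_0-\sqrt r)^2}{a\mu+r}$, the system undergoes a saddle-node bifurcation (of endemic equilibria).
   Context: $\mu$ denotes the total death rate of infectious individuals. Endemic equilibria are zeros of the vector field with $I\ne0$. A saddle-node bifurcation is the generic codimension-one bifurcation in which two equilibria (here a sink and a saddle) coalesce into a single equilibrium with a zero eigenvalue and disappear as the parameter crosses the critical value. *)

theory Defs
  imports "HOL-Analysis.Analysis"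
begin

definition sis_field :: "real \<Rightarrow> real \<Rightarrow> real \<Rightarrow> real \<Rightarrow> real \<Rightarrow> real \<times> real \<Rightarrow> real \<times> real" where
  "sis_field r b a mu A = (\<lambda>(S, I). (S * (A - S) - b * I * S, b * I * S - mu * I - r * I / (a + I)))"

definition R0 :: "real \<Rightarrow> real \<Rightarrow> real \<Rightarrow> real \<Rightarrow> real \<Rightarrow> real" where
  "R0 r b a mu A = b * A / (mu + r / a)"

definition endemic_eq :: "real \<Rightarrow> real \<Rightarrow> real \<Rightarrow> real \<Rightarrow> real \<Rightarrow> real \<times> real \<Rightarrow> bool" where
  "endemic_eq r b a mu A x \<longleftrightarrow> sis_field r b a mu A x = (0, 0) \<and> snd x \<noteq> 0 \<and> a + snd x \<noteq> 0"

definition lin_det :: "(real \<times> real \<Rightarrow> real \<times> real) \<Rightarrow> real" where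
  "lin_det L = fst (L (1, 0)) * snd (L (0, 1)) - fst (L (0, 1)) * snd (L (1, 0))"

definition lin_trace :: "(real \<times> real \<Rightarrow> real \<times> real) \<Rightarrow> real" where
  "lin_trace L = fst (L (1, 0)) + snd (L (0, 1))"

text \<open>Hyperbolic sink: both Jacobian eigenvalues have negative real part.\<close>
definition is_sink :: "(real \<times> real \<Rightarrow> real \<times> real) \<Rightarrow> real \<times> real \<Rightarrow> bool" where
  "is_sink F x \<longleftrightarrow> (\<exists>L. (F has_derivative L) (at x) \<and> lin_det L > 0 \<and> lin_trace L < 0)"

text \<open>Saddle: Jacobian eigenvalues real of opposite signs.\<close>
definition is_saddle :: "(real \<times> real \<Rightarrow> real \<times> real) \<Rightarrow> real \<times> real \<Rightarrow> bool" where
  "is_saddle F x \<longleftrightarrow> (\<exists>L. (F has_derivative L) (at x) \<and> lin_det L < 0)"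

definition has_zero_eigenvalue :: "(real \<times> real \<Rightarrow> real \<times> real) \<Rightarrow> real \<times> real \<Rightarrow> bool" where
  "has_zero_eigenvalue F x \<longleftrightarrow> (\<exists>L. (F has_derivative L) (at x) \<and> lin_det L = 0)"

definition saddle_node ::
  "(real \<Rightarrow> real \<times> real \<Rightarrow> real \<times> real) \<Rightarrow> (real \<Rightarrow> real \<times> real \<Rightarrow> bool) \<Rightarrow> real \<Rightarrow> bool" where
  "saddle_node F Eq p0 \<longleftrightarrow>
     (\<exists>x0 \<delta> \<epsilon> \<sigma> e1 e2. \<delta> > 0 \<and> \<epsilon> > 0 \<and> \<sigma> \<in> {-1, 1::real} \<and>
        Eq p0 x0 \<and> has_zero_eigenvalue (F p0) x0 \<and>
        {x \<in> ball x0 \<delta>. Eq p0 x} = {x0} \<and>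
        (\<forall>p. 0 < \<sigma> * (p - p0) \<and> \<sigma> * (p - p0) < \<epsilon> \<longrightarrow>
             {x \<in> ball x0 \<delta>. Eq p x} = {e1 p, e2 p} \<and> e1 p \<noteq> e2 p \<and>
             is_sink (F p) (e1 p) \<and> is_saddle (F p) (e2 p)) \<and>
        (e1 \<longlongrightarrow> x0) (at p0 within {p. 0 < \<sigma> * (p - p0)}) \<and>
        (e2 \<longlongrightarrow> x0) (at p0 within {p. 0 < \<sigma> * (p - p0)}) \<and>
        (\<forall>p. 0 < \<sigma> * (p0 - p) \<and> \<sigma> * (p0 - p) < \<epsilon> \<longrightarrow> {x \<in> ball x0 \<delta>. Eq p x} = {}))"

end

theory Submission
  imports Defs "HOL-Library.Quadratic_Discriminant"
begin

text \<open>Away from S = 0, an endemic equilibrium has S = A - b I, and J = a + I is a root of the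
  quadratic b^2 J^2 + (mu - a b^2 - b A) J + r. Its discriminant factors as
  b^2 (A - A0) (A - A0 + 4 sqrt r), where A0 is exactly the parameter at which R0 equals phi0: two
  equilibria exist for A slightly above A0, they merge at J0 = sqrt r / b, and none exist slightly
  below. At an equilibrium the Jacobian has determinant S I (b^2 J^2 - r) / J^2 and
  trace r I / J^2 - S. Since the two roots lie on either side of J0, the determinant has opposite
  signs on the two branches and vanishes at A0, while b < 1 keeps the trace negative near the
  merging point.\<close>

lemma sis_field_has_derivative:
  assumes "a + I \<noteq> 0"
  shows "(sis_field r b a mu A has_derivative
     (\<lambda>(h, k). ((A - 2*S - b*I) * h - b*S*k, b*I*h + (b*S - mu - r*a/(a + I)^2) * k))) (at (S, I))"
proof -
  have "sis_field r b a mu A = (\<lambda>x. (fst x * (A - fst x) - b * snd x * fst x,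
      b * snd x * fst x - mu * snd x - r * snd x / (a + snd x)))"
    by (simp add: sis_field_def split_def)
  then show ?thesis
    apply (elim ssubst)
    apply (rule has_derivative_eq_rhs)
     apply (rule derivative_eq_intros | simp add: assms)+
    apply (simp add: fun_eq_iff split_def)
    apply (intro conjI allI)
     apply (simp add: algebra_simps)
    using assms apply (simp add: inverse_eq_divide divide_simps)
    apply (simp add: algebra_simps power2_eq_square)
    done
qed

lemma infected_nullcline_iff:
  fixes r b a mu A I :: real
  assumes "a + I \<noteq> 0"
  shows "b*(A - b*I) - mu = r / (a + I) \<longleftrightarrow>
    b^2 * (a + I)^2 + (mu - a*b^2 - b*A) * (a + I) + r = 0"
proof -
  have cleared: "(a + I) * (b*(A - b*I) - mu - r / (a + I)) =
      - (b^2 * (a + I)^2 + (mu - a*b^2 - b*A) * (a + I) + r)"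
    using assms by (simp add: field_simps power2_eq_square)
  have "b*(A - b*I) - mu = r / (a + I) \<longleftrightarrow> (a + I) * (b*(A - b*I) - mu - r / (a + I)) = 0"
    using assms by simp
  also have "\<dots> \<longleftrightarrow> b^2 * (a + I)^2 + (mu - a*b^2 - b*A) * (a + I) + r = 0"
    unfolding cleared by (simp only: neg_equal_0_iff_equal)
  finally show ?thesis .
qed

lemma endemic_eq_iff:
  assumes "S \<noteq> 0"
  shows "endemic_eq r b a mu A (S, I) \<longleftrightarrow> I \<noteq> 0 \<and> a + I \<noteq> 0 \<and> S = A - b*I \<and>
    b^2 * (a + I)^2 + (mu - a*b^2 - b*A) * (a + I) + r = 0"
proof -
  have susceptible: "S * (A - S - b*I) = 0 \<longleftrightarrow> S = A - b*I"
    using assms by auto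
  have "endemic_eq r b a mu A (S, I) \<longleftrightarrow> I \<noteq> 0 \<and> a + I \<noteq> 0 \<and>
      S * (A - S - b*I) = 0 \<and> I * (b*S - mu - r / (a + I)) = 0"
    unfolding endemic_eq_def sis_field_def by (auto simp: algebra_simps)
  also have "\<dots> \<longleftrightarrow> I \<noteq> 0 \<and> a + I \<noteq> 0 \<and> S = A - b*I \<and> b*(A - b*I) - mu = r / (a + I)"
    unfolding susceptible by auto
  also have "\<dots> \<longleftrightarrow> I \<noteq> 0 \<and> a + I \<noteq> 0 \<and> S = A - b*I \<and>
      b^2 * (a + I)^2 + (mu - a*b^2 - b*A) * (a + I) + r = 0"
    using infected_nullcline_iff by blast
  finally show ?thesis .
qed

lemma endemic_eq_jacobian:
  assumes "endemic_eq r b a mu A (S, I)" "S \<noteq> 0"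
  obtains L where "(sis_field r b a mu A has_derivative L) (at (S, I))"
    "lin_det L = S * I * (b^2 * (a + I)^2 - r) / (a + I)^2"
    "lin_trace L = r * I / (a + I)^2 - S"
proof -
  have S: "S = A - b*I" and J: "a + I \<noteq> 0"
    and quad: "b^2 * (a + I)^2 + (mu - a*b^2 - b*A) * (a + I) + r = 0"
    using assms endemic_eq_iff by blast+
  have A: "A = S + b*I"
    using S by simp
  have "b*S - mu = r / (a + I)"
    using infected_nullcline_iff[OF J] quad S by blast
  then have mu: "mu = b*S - r / (a + I)"
    by linarith
  have "b*S - mu - r*a/(a + I)^2 = (r * (a + I) - r*a) / (a + I)^2"
    using J by (simp add: mu power2_eq_square diff_divide_distrib)
  then have L22: "b*S - mu - r*a/(a + I)^2 = r * I / (a + I)^2"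
    by (simp add: algebra_simps)
  define L where "L = (\<lambda>(h, k). ((A - 2*S - b*I) * h - b*S*k, b*I*h + (b*S - mu - r*a/(a + I)^2) * k))"
  have "(sis_field r b a mu A has_derivative L) (at (S, I))"
    unfolding L_def by (rule sis_field_has_derivative[OF J])
  moreover have "lin_det L = (- S) * (r * I / (a + I)^2) - (- b*S) * (b*I)"
    using L22 by (simp add: L_def lin_det_def A)
  moreover have "\<dots> = S * I * (b^2 * (a + I)^2 - r) / (a + I)^2"
    using J by (simp add: field_simps) (simp add: power2_eq_square)
  moreover have "lin_trace L = r * I / (a + I)^2 - S"
    using L22 by (simp add: L_def lin_trace_def A)
  ultimately show ?thesis
    using that by simp
qed

lemma endemic_eq_is_sink:
  assumes "endemic_eq r b a mu A (S, I)" "0 < S"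
    and "0 < I * (b^2 * (a + I)^2 - r)" "r * I / (a + I)^2 < S"
  shows "is_sink (sis_field r b a mu A) (S, I)"
proof -
  obtain L where L: "(sis_field r b a mu A has_derivative L) (at (S, I))"
    "lin_det L = S * I * (b^2 * (a + I)^2 - r) / (a + I)^2"
    "lin_trace L = r * I / (a + I)^2 - S"
    using endemic_eq_jacobian[OF assms(1)] assms(2) by auto
  have "0 < (a + I)^2"
    using assms(1) by (simp add: endemic_eq_def)
  moreover have "0 < S * I * (b^2 * (a + I)^2 - r)"
    using assms(2,3) by (simp add: mult.assoc)
  ultimately show ?thesis
    unfolding is_sink_def using L assms(4) by auto
qed

lemma endemic_eq_is_saddle:
  assumes "endemic_eq r b a mu A (S, I)" "0 < S" "I * (b^2 * (a + I)^2 - r) < 0"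
  shows "is_saddle (sis_field r b a mu A) (S, I)"
proof -
  obtain L where L: "(sis_field r b a mu A has_derivative L) (at (S, I))"
    "lin_det L = S * I * (b^2 * (a + I)^2 - r) / (a + I)^2"
    using endemic_eq_jacobian[OF assms(1)] assms(2) by auto
  have "0 < (a + I)^2"
    using assms(1) by (simp add: endemic_eq_def)
  moreover have "S * I * (b^2 * (a + I)^2 - r) < 0"
    using assms(2,3) by (simp add: mult.assoc mult_pos_neg)
  ultimately show ?thesis
    unfolding is_saddle_def using L by (auto simp: divide_neg_pos)
qed

lemma endemic_eq_has_zero_eigenvalue:
  assumes "endemic_eq r b a mu A (S, I)" "S \<noteq> 0" "b^2 * (a + I)^2 = r"
  shows "has_zero_eigenvalue (sis_field r b a mu A) (S, I)"
  using endemic_eq_jacobian[OF assms(1,2)] assms(3) unfolding has_zero_eigenvalue_def by auto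

lemma quadratic_roots_straddle:
  fixes c \<beta> \<gamma> :: real
  assumes "0 < c" "0 < \<gamma>" "\<beta> < 0" "0 < discrim c \<beta> \<gamma>"
  defines "x1 \<equiv> (- \<beta> - sqrt (discrim c \<beta> \<gamma>)) / (2*c)"
    and "x2 \<equiv> (- \<beta> + sqrt (discrim c \<beta> \<gamma>)) / (2*c)"
  shows "x1 < x2" "c * x1^2 < \<gamma>" "\<gamma> < c * x2^2"
proof -
  define s where "s = sqrt (discrim c \<beta> \<gamma>)"
  have s: "0 < s" "s^2 = \<beta>^2 - 4*c*\<gamma>"
    using assms(4) by (simp_all add: s_def discrim_def)
  have "s^2 < (- \<beta>)^2"
    using s(2) assms(1,2) by simp
  then have "s < - \<beta>"
    using power_less_imp_less_base[of s 2 "- \<beta>"] assms(3) by simp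
  then have x1_pos: "0 < x1"
    using assms(1) by (simp add: x1_def s_def)
  show x12: "x1 < x2"
    using s(1) assms(1) by (simp add: x1_def x2_def s_def divide_strict_right_mono)
  have "c * x1 * x2 = (\<beta>^2 - s^2) / (4*c)"
    using assms(1) unfolding x1_def x2_def s_def[symmetric]
    by (simp add: field_simps power2_eq_square)
  also have "\<dots> = \<gamma>"
    using s(2) assms(1) by simp
  finally have vieta: "c * x1 * x2 = \<gamma>" .
  have "c * x1^2 < c * x1 * x2" "c * x1 * x2 < c * x2^2"
    using x1_pos x12 assms(1) by (simp_all add: power2_eq_square)
  then show "c * x1^2 < \<gamma>" "\<gamma> < c * x2^2"
    using vieta by simp_all
qed

lemma R0_eq_critical_iff:
  assumes "0 < a" "0 < a * mu + r" "0 \<le> r"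
  shows "R0 r b a mu A = 1 - (a*b - sqrt r)^2 / (a*mu + r) \<longleftrightarrow> b*A - mu + a*b^2 = 2*b * sqrt r"
proof -
  have "R0 r b a mu A = a*b*A / (a*mu + r)"
    using assms(1) by (simp add: R0_def field_simps)
  moreover have "1 - (a*b - sqrt r)^2 / (a*mu + r) = (a*mu + r - (a*b - sqrt r)^2) / (a*mu + r)"
    using assms(2) by (simp add: diff_divide_distrib)
  moreover have "a*mu + r - (a*b - sqrt r)^2 = a * (mu - a*b^2 + 2*b * sqrt r)"
    using assms(3) by (simp add: power2_eq_square algebra_simps)
  ultimately have "R0 r b a mu A = 1 - (a*b - sqrt r)^2 / (a*mu + r) \<longleftrightarrow>
      a * (b*A) = a * (mu - a*b^2 + 2*b * sqrt r)"
    using assms(2) by (simp add: mult.assoc)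
  also have "\<dots> \<longleftrightarrow> b*A - mu + a*b^2 = 2*b * sqrt r"
    using assms(1) by auto
  finally show ?thesis .
qed

locale sis_critical =
  fixes r b a mu A0 :: real
  assumes r_pos: "0 < r" and b_pos: "0 < b" and b_less_1: "b < 1"
    and a_pos: "0 < a" and mu_pos: "0 < mu"
    and critical: "b*A0 - mu + a*b^2 = 2*b * sqrt r"
    and infected_nonzero: "sqrt r \<noteq> a*b"
begin

definition lin_coeff :: "real \<Rightarrow> real" where
  "lin_coeff p = mu - a*b^2 - b*p"

definition disc :: "real \<Rightarrow> real" where
  "disc p = discrim (b^2) (lin_coeff p) r"

definition J_plus :: "real \<Rightarrow> real" where
  "J_plus p = (- lin_coeff p + sqrt (disc p)) / (2*b^2)"

definition J_minus :: "real \<Rightarrow> real" where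
  "J_minus p = (- lin_coeff p - sqrt (disc p)) / (2*b^2)"

definition eq_point :: "real \<Rightarrow> real \<Rightarrow> real \<times> real" where
  "eq_point J p = (p - b*(J - a), J - a)"

definition J0 :: real where
  "J0 = sqrt r / b"

definition x0 :: "real \<times> real" where
  "x0 = eq_point J0 A0"

text \<open>The last condition says that the Jacobian trace at an equilibrium is negative.\<close>

definition same_signs :: "(real \<times> real) set" where
  "same_signs = {x. 0 < fst x \<and> 0 < a + snd x \<and> 0 < snd x0 * snd x \<and>
     r * snd x / (a + snd x)^2 < fst x}"

lemma sqrt_r: "0 < sqrt r" "sqrt r ^ 2 = r"
  using r_pos by simp_all

lemma lin_coeff_eq: "lin_coeff p = - b * (p - A0 + 2 * sqrt r)"
  using critical unfolding lin_coeff_def by (simp add: algebra_simps)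

lemma disc_factor: "disc p = b^2 * (p - A0) * (p - A0 + 4 * sqrt r)"
  unfolding disc_def discrim_def lin_coeff_eq
  using sqrt_r(2) by (simp add: power2_eq_square algebra_simps)

lemma J_at_critical: "J_plus A0 = J0" "J_minus A0 = J0"
  using b_pos
  by (simp_all add: J_plus_def J_minus_def J0_def disc_factor lin_coeff_eq power2_eq_square)

lemma x0_eq: "x0 = (mu/b + sqrt r, sqrt r / b - a)"
proof -
  have "A0 - b*(sqrt r / b - a) = mu/b + sqrt r"
    using critical b_pos by (simp add: field_simps power2_eq_square)
  then show ?thesis
    by (simp add: x0_def eq_point_def J0_def)
qed

lemma x0_in_same_signs: "x0 \<in> same_signs"
proof -
  have I0: "sqrt r / b - a \<noteq> 0"
    using infected_nonzero b_pos by (auto simp: field_simps)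
  have "r * (sqrt r / b - a) / (sqrt r / b)^2 = b * sqrt r - a*b^2"
    using b_pos sqrt_r by (simp add: field_simps power2_eq_square)
  also have "\<dots> < mu/b + sqrt r"
  proof -
    have "b * sqrt r < sqrt r" "0 < a*b^2" "0 < mu/b"
      using b_less_1 sqrt_r a_pos b_pos mu_pos by simp_all
    then show ?thesis
      by linarith
  qed
  finally have trace_neg: "r * (sqrt r / b - a) / (sqrt r / b)^2 < mu/b + sqrt r" .
  have "0 < (sqrt r / b - a) * (sqrt r / b - a)" "0 < mu/b + sqrt r" "0 < sqrt r / b"
    using I0 b_pos sqrt_r mu_pos by (auto simp: zero_less_mult_iff add_pos_pos)
  then show ?thesis
    using trace_neg unfolding same_signs_def x0_eq by simp
qed

lemma eventually_same_signs: "eventually (\<lambda>x. x \<in> same_signs) (nhds x0)"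
proof -
  have x0: "0 < fst x0" "0 < a + snd x0" "0 < snd x0 * snd x0"
    "r * snd x0 / (a + snd x0)^2 < fst x0"
    using x0_in_same_signs by (simp_all add: same_signs_def)
  have id: "((\<lambda>x. x) \<longlongrightarrow> x0) (nhds x0)"
    by (rule filterlim_ident)
  have "eventually (\<lambda>x. 0 < fst x) (nhds x0)"
    by (rule order_tendstoD(1)[OF tendsto_fst[OF id] x0(1)])
  moreover have "eventually (\<lambda>x. 0 < a + snd x) (nhds x0)"
    by (rule order_tendstoD(1)[OF tendsto_add[OF tendsto_const tendsto_snd[OF id]] x0(2)])
  moreover have "eventually (\<lambda>x. 0 < snd x0 * snd x) (nhds x0)"
    by (rule order_tendstoD(1)[OF tendsto_mult[OF tendsto_const tendsto_snd[OF id]] x0(3)])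
  moreover have "eventually (\<lambda>x. r * snd x / (a + snd x)^2 - fst x < 0) (nhds x0)"
  proof (rule order_tendstoD(2))
    show "((\<lambda>x. r * snd x / (a + snd x)^2 - fst x) \<longlongrightarrow>
        r * snd x0 / (a + snd x0)^2 - fst x0) (nhds x0)"
      using x0(2) by (intro tendsto_intros id) auto
  qed (use x0(4) in simp)
  ultimately show ?thesis
    unfolding same_signs_def by eventually_elim simp
qed

lemma endemic_eq_same_signs_iff:
  assumes "x \<in> same_signs"
  shows "endemic_eq r b a mu p x \<longleftrightarrow>
    0 \<le> disc p \<and> (x = eq_point (J_plus p) p \<or> x = eq_point (J_minus p) p)"
proof -
  obtain S I where x: "x = (S, I)"
    by fastforce
  have "S \<noteq> 0" "I \<noteq> 0" "a + I \<noteq> 0"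
    using assms unfolding x same_signs_def by auto
  then have "endemic_eq r b a mu p x \<longleftrightarrow> S = p - b*I \<and>
      b^2 * (a + I)^2 + lin_coeff p * (a + I) + r = 0"
    unfolding x endemic_eq_iff[OF \<open>S \<noteq> 0\<close>] lin_coeff_def by auto
  also have "\<dots> \<longleftrightarrow> S = p - b*I \<and> 0 \<le> disc p \<and> (a + I = J_plus p \<or> a + I = J_minus p)"
    using discriminant_iff[of "b^2" "a + I" "lin_coeff p" r] b_pos
    unfolding disc_def J_plus_def J_minus_def by auto
  also have "\<dots> \<longleftrightarrow> 0 \<le> disc p \<and> (x = eq_point (J_plus p) p \<or> x = eq_point (J_minus p) p)"
    unfolding x eq_point_def by auto
  finally show ?thesis .
qed

lemma J_tendsto: "(J_plus \<longlongrightarrow> J0) (at A0)" "(J_minus \<longlongrightarrow> J0) (at A0)"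
proof -
  have "isCont J_plus A0" "isCont J_minus A0"
    unfolding J_plus_def J_minus_def disc_def discrim_def lin_coeff_def
    using b_pos by (auto intro!: continuous_intros)
  then show "(J_plus \<longlongrightarrow> J0) (at A0)" "(J_minus \<longlongrightarrow> J0) (at A0)"
    using J_at_critical by (simp_all add: isCont_def)
qed

lemma eq_point_tendsto:
  assumes "(J \<longlongrightarrow> J0) (at A0)"
  shows "((\<lambda>p. eq_point (J p) p) \<longlongrightarrow> x0) (at A0)"
  unfolding eq_point_def x0_def by (intro tendsto_intros assms)

lemma roots_straddle_J0:
  assumes "A0 < p"
  shows "J_minus p < J_plus p" "b^2 * (J_minus p)^2 < r" "r < b^2 * (J_plus p)^2"
proof -
  have "0 < p - A0 + 2 * sqrt r" "0 < p - A0 + 4 * sqrt r"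
    using assms sqrt_r(1) by linarith+
  with assms have "0 < disc p" "lin_coeff p < 0"
    using b_pos by (simp_all add: disc_factor lin_coeff_eq)
  then show "J_minus p < J_plus p" "b^2 * (J_minus p)^2 < r" "r < b^2 * (J_plus p)^2"
    using quadratic_roots_straddle[of "b^2" r "lin_coeff p"] b_pos r_pos
    unfolding J_plus_def J_minus_def disc_def by simp_all
qed

lemma same_signs_endemic_eq_is_sink:
  assumes "x \<in> same_signs" "endemic_eq r b a mu p x"
    and "0 < snd x0 * (b^2 * (a + snd x)^2 - r)"
  shows "is_sink (sis_field r b a mu p) x"
proof -
  obtain S I where x: "x = (S, I)"
    by fastforce
  have "0 < S" "0 < snd x0 * I" "r * I / (a + I)^2 < S"
    using assms(1) unfolding x same_signs_def by auto
  moreover have "0 < I * (b^2 * (a + I)^2 - r)"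
    using \<open>0 < snd x0 * I\<close> assms(3) unfolding x by (auto simp: zero_less_mult_iff)
  ultimately show ?thesis
    using endemic_eq_is_sink assms(2) unfolding x by blast
qed

lemma same_signs_endemic_eq_is_saddle:
  assumes "x \<in> same_signs" "endemic_eq r b a mu p x"
    and "snd x0 * (b^2 * (a + snd x)^2 - r) < 0"
  shows "is_saddle (sis_field r b a mu p) x"
proof -
  obtain S I where x: "x = (S, I)"
    by fastforce
  have "0 < S" "0 < snd x0 * I"
    using assms(1) unfolding x same_signs_def by auto
  moreover have "I * (b^2 * (a + I)^2 - r) < 0"
    using \<open>0 < snd x0 * I\<close> assms(3) unfolding x by (auto simp: zero_less_mult_iff mult_less_0_iff)
  ultimately show ?thesis
    using endemic_eq_is_saddle assms(2) unfolding x by blast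
qed

text \<open>The sign of the Jacobian determinant is that of I (b^2 J^2 - r), so the sink lies on the
  larger root when snd x0 > 0 and on the smaller one otherwise.\<close>

definition sink_J :: "real \<Rightarrow> real" where
  "sink_J = (if 0 < snd x0 then J_plus else J_minus)"

definition saddle_J :: "real \<Rightarrow> real" where
  "saddle_J = (if 0 < snd x0 then J_minus else J_plus)"

lemma sink_saddle_J_tendsto: "(sink_J \<longlongrightarrow> J0) (at A0)" "(saddle_J \<longlongrightarrow> J0) (at A0)"
  using J_tendsto by (simp_all add: sink_J_def saddle_J_def)

lemma sink_saddle_J_signs:
  assumes "A0 < p"
  shows "0 < snd x0 * (b^2 * (sink_J p)^2 - r)" "snd x0 * (b^2 * (saddle_J p)^2 - r) < 0"
    and "sink_J p \<noteq> saddle_J p"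
proof -
  have "snd x0 \<noteq> 0"
    using x0_in_same_signs by (auto simp: same_signs_def)
  then show "0 < snd x0 * (b^2 * (sink_J p)^2 - r)" "snd x0 * (b^2 * (saddle_J p)^2 - r) < 0"
    using roots_straddle_J0[OF assms]
    by (auto simp: sink_J_def saddle_J_def zero_less_mult_iff mult_less_0_iff)
  show "sink_J p \<noteq> saddle_J p"
    using roots_straddle_J0(1)[OF assms] by (auto simp: sink_J_def saddle_J_def)
qed

lemma endemic_eq_after_critical:
  assumes "ball x0 \<delta> \<subseteq> same_signs" "A0 < p"
    and "eq_point (J_plus p) p \<in> ball x0 \<delta>" "eq_point (J_minus p) p \<in> ball x0 \<delta>"
  shows "{x \<in> ball x0 \<delta>. endemic_eq r b a mu p x} = {eq_point (sink_J p) p, eq_point (saddle_J p) p}"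
    and "eq_point (sink_J p) p \<noteq> eq_point (saddle_J p) p"
    and "is_sink (sis_field r b a mu p) (eq_point (sink_J p) p)"
    and "is_saddle (sis_field r b a mu p) (eq_point (saddle_J p) p)"
proof -
  have disc: "0 \<le> disc p"
    using assms(2) sqrt_r(1) b_pos by (simp add: disc_factor)
  have branches: "{eq_point (sink_J p) p, eq_point (saddle_J p) p} =
      {eq_point (J_plus p) p, eq_point (J_minus p) p}"
    by (auto simp: sink_J_def saddle_J_def)
  have in_ball: "eq_point (sink_J p) p \<in> ball x0 \<delta>" "eq_point (saddle_J p) p \<in> ball x0 \<delta>"
    using assms(3,4) by (simp_all add: sink_J_def saddle_J_def)
  show "{x \<in> ball x0 \<delta>. endemic_eq r b a mu p x} = {eq_point (sink_J p) p, eq_point (saddle_J p) p}"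
    unfolding branches using assms disc endemic_eq_same_signs_iff by blast
  then have "endemic_eq r b a mu p (eq_point (sink_J p) p)"
    "endemic_eq r b a mu p (eq_point (saddle_J p) p)"
    using in_ball by blast+
  then show "is_sink (sis_field r b a mu p) (eq_point (sink_J p) p)"
    "is_saddle (sis_field r b a mu p) (eq_point (saddle_J p) p)"
    using in_ball assms(1) sink_saddle_J_signs[OF assms(2)]
      same_signs_endemic_eq_is_sink same_signs_endemic_eq_is_saddle
    by (auto simp: eq_point_def)
  show "eq_point (sink_J p) p \<noteq> eq_point (saddle_J p) p"
    using sink_saddle_J_signs(3)[OF assms(2)] by (simp add: eq_point_def)
qed

lemma endemic_eq_before_critical:
  assumes "ball x0 \<delta> \<subseteq> same_signs" "A0 - 4 * sqrt r < p" "p < A0"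
  shows "{x \<in> ball x0 \<delta>. endemic_eq r b a mu p x} = {}"
proof -
  have "b^2 * (p - A0) < 0" "0 < p - A0 + 4 * sqrt r"
    using assms(2,3) b_pos by (simp_all add: mult_pos_neg)
  then have "disc p < 0"
    unfolding disc_factor by (simp add: mult_neg_pos)
  then show ?thesis
    using assms(1) endemic_eq_same_signs_iff by fastforce
qed

lemma endemic_eq_at_critical:
  assumes "ball x0 \<delta> \<subseteq> same_signs" "0 < \<delta>"
  shows "{x \<in> ball x0 \<delta>. endemic_eq r b a mu A0 x} = {x0}"
    and "has_zero_eigenvalue (sis_field r b a mu A0) x0"
proof -
  have iff: "x \<in> ball x0 \<delta> \<Longrightarrow> endemic_eq r b a mu A0 x \<longleftrightarrow> x = x0" for x
    using assms(1) x0_in_same_signs endemic_eq_same_signs_iff[of x A0]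
    by (auto simp: disc_factor J_at_critical x0_def)
  have x0_ball: "x0 \<in> ball x0 \<delta>"
    using assms(2) by simp
  show "{x \<in> ball x0 \<delta>. endemic_eq r b a mu A0 x} = {x0}"
    using iff x0_ball by blast
  have "endemic_eq r b a mu A0 x0"
    using iff x0_ball by blast
  moreover have "b^2 * (a + snd x0)^2 = r" "fst x0 \<noteq> 0"
    using b_pos r_pos x0_in_same_signs
    by (simp_all add: x0_def eq_point_def J0_def power_divide same_signs_def)
  ultimately show "has_zero_eigenvalue (sis_field r b a mu A0) x0"
    using endemic_eq_has_zero_eigenvalue[of r b a mu A0 "fst x0" "snd x0"] by simp
qed

theorem saddle_node_at_critical: "saddle_node (sis_field r b a mu) (endemic_eq r b a mu) A0"
proof -
  obtain \<delta> where \<delta>: "0 < \<delta>" "ball x0 \<delta> \<subseteq> same_signs"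
    using eventually_same_signs unfolding eventually_nhds_metric by (force simp: dist_commute)
  have "eventually (\<lambda>p. eq_point (J_plus p) p \<in> ball x0 \<delta> \<and> eq_point (J_minus p) p \<in> ball x0 \<delta>) (at A0)"
    using tendstoD[OF eq_point_tendsto[OF J_tendsto(1)] \<delta>(1)]
      tendstoD[OF eq_point_tendsto[OF J_tendsto(2)] \<delta>(1)]
    by eventually_elim (simp add: dist_commute)
  then obtain d where d: "0 < d" and branches_near: "\<And>p. p \<noteq> A0 \<Longrightarrow> dist p A0 < d \<Longrightarrow>
      eq_point (J_plus p) p \<in> ball x0 \<delta> \<and> eq_point (J_minus p) p \<in> ball x0 \<delta>"
    unfolding eventually_at by auto
  define \<epsilon> where "\<epsilon> = min d (4 * sqrt r)"
  have "0 < \<epsilon>"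
    using d r_pos by (simp add: \<epsilon>_def)
  moreover have "{x \<in> ball x0 \<delta>. endemic_eq r b a mu p x} =
        {eq_point (sink_J p) p, eq_point (saddle_J p) p} \<and>
      eq_point (sink_J p) p \<noteq> eq_point (saddle_J p) p \<and>
      is_sink (sis_field r b a mu p) (eq_point (sink_J p) p) \<and>
      is_saddle (sis_field r b a mu p) (eq_point (saddle_J p) p)"
    if "A0 < p" "p - A0 < \<epsilon>" for p
    using endemic_eq_after_critical[OF \<delta>(2) that(1)] branches_near[of p] that
    by (auto simp: \<epsilon>_def dist_real_def)
  moreover have "{x \<in> ball x0 \<delta>. endemic_eq r b a mu p x} = {}"
    if "p < A0" "A0 - p < \<epsilon>" for p
    using endemic_eq_before_critical[OF \<delta>(2)] that by (simp add: \<epsilon>_def)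
  moreover have "((\<lambda>p. eq_point (sink_J p) p) \<longlongrightarrow> x0) (at A0 within {p. 0 < 1 * (p - A0)})"
    "((\<lambda>p. eq_point (saddle_J p) p) \<longlongrightarrow> x0) (at A0 within {p. 0 < 1 * (p - A0)})"
    using eq_point_tendsto[OF sink_saddle_J_tendsto(1)] eq_point_tendsto[OF sink_saddle_J_tendsto(2)]
    by (auto intro: tendsto_within_subset)
  ultimately show ?thesis
    unfolding saddle_node_def
    using \<delta> endemic_eq_at_critical[OF \<delta>(2,1)]
    by (intro exI[of _ x0] exI[of _ \<delta>] exI[of _ \<epsilon>] exI[of _ 1]
        exI[of _ "\<lambda>p. eq_point (sink_J p) p"] exI[of _ "\<lambda>p. eq_point (saddle_J p) p"]) auto
qed

end

theorem lemma5p3: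
  fixes r b a mu A0 :: real
  assumes "r > 0" and "b > 0" and "a > 0" and "mu > 0" and "b < 1"
    and "A0 > 0"
    and "R0 r b a mu A0 = 1 - (a * b - sqrt r)^2 / (a * mu + r)"
    and "sqrt r \<noteq> a * b"
  shows "saddle_node (sis_field r b a mu) (endemic_eq r b a mu) A0"
proof -
  have "b*A0 - mu + a*b^2 = 2*b * sqrt r"
    using R0_eq_critical_iff[of a mu r b A0] assms by (simp add: add_pos_pos)
  then interpret sis_critical r b a mu A0
    using assms by unfold_locales auto
  show ?thesis
    by (rule saddle_node_at_critical)
qed

end
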